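(* Let $n\ge1$ and let $c_0,\dots,c_{n-1}$ be mutually distinct complex numbers with $|c_j|=1$. Suppose there exist nonzero real numbers $x_0,\dots,x_{n-1}$ such that $$\sum_{j=0}^{n-1}c_j^kx_j=\delta_{k0},\qquad k=0,1,\dots,n-1 .$$ Then $x_j=1/n$ for all $j$, and, after a suitable reordering of $c_1,\dots,c_{n-1}$, $c_j=c_0e^{2\pi ij/n}$ for $j=0,1,\dots,n-1$.
   Context: $\delta_{k0}$ denotes the Kronecker delta. *)

theory Defs
  imports "HOL-Analysis.Analysis"
begin

end

theory Submission
  imports Defs "HOL-Computational_Algebra.Polynomial" "HOL-Combinatorics.Permutations"
begin

text \<open>Since \<open>cnj z = inverse z\<close> on the unit circle and the weights are real, the moment
  conditions extend to all exponents \<open>k\<close> with \<open>\<bar>k\<bar> < n\<close>. Pairing them with the monic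
  polynomial \<open>\<Prod>j. z - c j\<close> shows that its coefficients of \<open>z ^ s\<close>, \<open>0 < s < n\<close>, vanish,
  so all \<open>c j\<close> are roots of one equation \<open>z ^ n = a\<close>: being \<open>n\<close> distinct roots, they are
  \<open>c 0\<close> times the \<open>n\<close>-th roots of unity. Testing the moments against the Lagrange-type
  polynomial \<open>(z ^ n - c i ^ n) / (z - c i)\<close> then gives \<open>n * x i = 1\<close>.\<close>

lemma unit_circle_moments_power_int:
  fixes c :: "nat \<Rightarrow> complex" and x :: "nat \<Rightarrow> real"
  assumes unit: "\<And>j. j < n \<Longrightarrow> norm (c j) = 1"
    and moments: "\<And>k. k < n \<Longrightarrow>
           (\<Sum>j<n. c j ^ k * complex_of_real (x j)) = (if k = 0 then 1 else 0)"
    and k: "\<bar>k\<bar> < int n"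
  shows "(\<Sum>j<n. c j powi k * complex_of_real (x j)) = (if k = 0 then 1 else 0)"
proof (cases "k \<ge> 0")
  case True
  then obtain m where "k = int m" by (metis nonneg_eq_int)
  then show ?thesis using moments[of m] k by simp
next
  case False
  define m where "m = nat (- k)"
  have m: "k = - int m" "0 < m" "m < n" using False k by (auto simp: m_def)
  have "c j powi k = cnj (c j ^ m)" if "j < n" for j
    using divide_conv_cnj[OF unit[OF that], of 1]
    by (simp add: m(1) power_int_minus divide_inverse flip: power_inverse)
  then have "(\<Sum>j<n. c j powi k * complex_of_real (x j))
      = cnj (\<Sum>j<n. c j ^ m * complex_of_real (x j))"
    by simp
  also have "\<dots> = 0" using moments[OF m(3)] m(2) by simp
  finally show ?thesis using m by simp
qed

lemma unit_circle_moments_extract_coeff: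
  fixes c :: "nat \<Rightarrow> complex" and x :: "nat \<Rightarrow> real" and p :: "complex poly"
  assumes unit: "\<And>j. j < n \<Longrightarrow> norm (c j) = 1"
    and moments: "\<And>k. k < n \<Longrightarrow>
           (\<Sum>j<n. c j ^ k * complex_of_real (x j)) = (if k = 0 then 1 else 0)"
    and "degree p \<le> n" "0 < s" "s < n"
  shows "(\<Sum>j<n. cnj (c j) ^ s * complex_of_real (x j) * poly p (c j)) = coeff p s"
proof -
  have poly_p: "poly p z = (\<Sum>i\<le>n. coeff p i * z ^ i)" for z
    by (subst poly_as_sum_of_monoms'[OF \<open>degree p \<le> n\<close>, symmetric])
      (simp add: poly_sum poly_monom)
  have shift: "cnj (c j) ^ s * c j ^ i = c j powi (int i - int s)" if "j < n" for i j
  proof -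
    have "c j \<noteq> 0" using unit[OF that] by auto
    then have "c j powi (int i - int s) = c j ^ i / c j ^ s" by (simp add: power_int_diff)
    also have "\<dots> = cnj (c j) ^ s * c j ^ i"
      using divide_conv_cnj[of "c j ^ s"] unit[OF that] by (simp add: norm_power mult.commute)
    finally show ?thesis ..
  qed
  have "(\<Sum>j<n. cnj (c j) ^ s * complex_of_real (x j) * poly p (c j))
      = (\<Sum>i\<le>n. coeff p i * (\<Sum>j<n. c j powi (int i - int s) * complex_of_real (x j)))"
    unfolding poly_p sum_distrib_left
    by (subst sum.swap) (intro sum.cong refl, simp add: shift [symmetric] mult_ac)
  also have "\<dots> = (\<Sum>i\<le>n. coeff p i * (if i = s then 1 else 0))"
    using assms by (intro sum.cong refl) (subst unit_circle_moments_power_int, auto)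
  also have "\<dots> = coeff p s" using assms by (simp add: if_distrib cong: if_cong)
  finally show ?thesis .
qed

lemma unit_circle_moments_equal_powers:
  fixes c :: "nat \<Rightarrow> complex" and x :: "nat \<Rightarrow> real"
  assumes unit: "\<And>j. j < n \<Longrightarrow> norm (c j) = 1"
    and moments: "\<And>k. k < n \<Longrightarrow>
           (\<Sum>j<n. c j ^ k * complex_of_real (x j)) = (if k = 0 then 1 else 0)"
    and "j < n"
  shows "c j ^ n = c 0 ^ n"
proof -
  define p where "p = (\<Prod>j<n. [:- c j, 1:])"
  have degree: "degree p = n"
    unfolding p_def by (subst degree_prod_eq_sum_degree) auto
  have lead: "coeff p n = 1"
    using lead_coeff_prod[of "\<lambda>j. [:- c j, 1:]" "{..<n}"] degree unfolding p_def by simp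
  have root: "poly p (c i) = 0" if "i < n" for i
    unfolding p_def poly_prod using that by (intro prod_zero) auto
  have middle: "coeff p s = 0" if "0 < s" "s < n" for s
    using unit_circle_moments_extract_coeff[OF unit moments, of p s] degree root that by simp
  have "poly p z = (\<Sum>i\<in>{0, n}. coeff p i * z ^ i)" for z
    unfolding poly_altdef degree
    by (rule sum.mono_neutral_right) (auto simp: middle)
  then have "poly p z = coeff p 0 + z ^ n" for z using lead \<open>j < n\<close> by simp
  then have "c i ^ n = - coeff p 0" if "i < n" for i
    using root[OF that] by (simp add: eq_neg_iff_add_eq_0 add.commute)
  then show ?thesis using \<open>j < n\<close> by simp
qed

lemma moments_sum_poly_eq_const_coeff:
  fixes c w :: "nat \<Rightarrow> complex"
  assumes moments: "\<And>k. k < n \<Longrightarrow> (\<Sum>j<n. c j ^ k * w j) = (if k = 0 then 1 else 0)"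
    and "0 < n"
  shows "(\<Sum>j<n. w j * (\<Sum>m<n. a m * c j ^ m)) = a 0"
proof -
  have "(\<Sum>j<n. w j * (\<Sum>m<n. a m * c j ^ m)) = (\<Sum>m<n. a m * (\<Sum>j<n. c j ^ m * w j))"
    unfolding sum_distrib_left by (subst sum.swap) (simp add: mult_ac)
  also have "\<dots> = (\<Sum>m<n. a m * (if m = 0 then 1 else 0))"
    using moments by (intro sum.cong) auto
  also have "\<dots> = a 0" using \<open>0 < n\<close> by (simp add: if_distrib cong: if_cong)
  finally show ?thesis .
qed

lemma moments_equal_powers_weight:
  fixes c w :: "nat \<Rightarrow> complex"
  assumes inj: "inj_on c {..<n}"
    and powers: "\<And>j. j < n \<Longrightarrow> c j ^ n = c i ^ n"
    and moments: "\<And>k. k < n \<Longrightarrow> (\<Sum>j<n. c j ^ k * w j) = (if k = 0 then 1 else 0)"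
    and "i < n" "c i \<noteq> 0"
  shows "w i = 1 / of_nat n"
proof -
  define q where "q z = (\<Sum>m<n. c i ^ (n - Suc m) * z ^ m)" for z
  have q_other: "q (c j) = 0" if "j < n" "j \<noteq> i" for j
  proof -
    have "(c j - c i) * q (c j) = c j ^ n - c i ^ n"
      unfolding q_def using power_diff_sumr2[of "c j" n "c i"] by simp
    then show ?thesis using powers[OF \<open>j < n\<close>] inj that \<open>i < n\<close> by (auto dest: inj_onD)
  qed
  have "c i ^ (n - Suc m) * c i ^ m = c i ^ (n - 1)" if "m < n" for m
    using that by (simp flip: power_add)
  then have q_self: "q (c i) = of_nat n * c i ^ (n - 1)"
    unfolding q_def by simp
  have "c i ^ (n - 1) = (\<Sum>j<n. w j * q (c j))"
    unfolding q_def using moments_sum_poly_eq_const_coeff[OF moments] \<open>i < n\<close> by simp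
  also have "\<dots> = w i * q (c i)"
    using q_other \<open>i < n\<close> by (subst sum.remove[of _ i]) auto
  finally have "w i * of_nat n * c i ^ (n - 1) = 1 * c i ^ (n - 1)"
    by (simp add: q_self mult_ac)
  then show ?thesis using \<open>c i \<noteq> 0\<close> \<open>i < n\<close> by (simp add: field_simps)
qed

lemma permutes_matching_images:
  assumes "inj_on f A" "inj_on g A" "g ` A = f ` A"
  shows "\<exists>\<sigma>. \<sigma> permutes A \<and> (\<forall>a\<in>A. f (\<sigma> a) = g a)"
proof -
  define \<sigma> where "\<sigma> a = (if a \<in> A then inv_into A f (g a) else a)" for a
  have "bij_betw g A (f ` A)" using assms by (simp add: bij_betw_def)
  moreover have "bij_betw (inv_into A f) (f ` A) A"
    using assms(1) by (intro bij_betw_inv_into inj_on_imp_bij_betw)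
  ultimately have "bij_betw (inv_into A f \<circ> g) A A" by (rule bij_betw_trans)
  then have "bij_betw \<sigma> A A" by (rule bij_betw_cong[THEN iffD1, rotated]) (simp add: \<sigma>_def)
  then have "\<sigma> permutes A" by (rule bij_imp_permutes) (simp add: \<sigma>_def)
  moreover have "f (\<sigma> a) = g a" if "a \<in> A" for a
  proof -
    have "g a \<in> f ` A" using that assms(3) by blast
    then show ?thesis using that by (simp add: \<sigma>_def f_inv_into_f)
  qed
  ultimately show ?thesis by blast
qed

lemma equal_powers_image_eq_rotated_roots_of_unity:
  fixes c :: "nat \<Rightarrow> complex"
  assumes "n \<ge> 1" "inj_on c {..<n}" "c 0 \<noteq> 0"
    and powers: "\<And>j. j < n \<Longrightarrow> c j ^ n = c 0 ^ n"
  shows "(\<lambda>k. c 0 * exp (2 * complex_of_real pi * \<i> * of_nat k / of_nat n)) ` {..<n}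
      = c ` {..<n}"
    (is "?g ` _ = _")
proof -
  have inj_g: "inj_on ?g {..<n}"
    using complex_root_unity_eq[OF \<open>n \<ge> 1\<close>] \<open>c 0 \<noteq> 0\<close> by (auto intro!: inj_onI)
  have "c j \<in> ?g ` {..<n}" if "j < n" for j
  proof -
    have "(c j / c 0) ^ n = 1" using powers[OF that] \<open>c 0 \<noteq> 0\<close> by (simp add: power_divide)
    then obtain k where "k < n" "c j / c 0 = exp (2 * complex_of_real pi * \<i> * of_nat k / of_nat n)"
      using complex_roots_unity[OF \<open>n \<ge> 1\<close>] by blast
    then show ?thesis using \<open>c 0 \<noteq> 0\<close> by (auto simp: field_simps)
  qed
  then have "c ` {..<n} \<subseteq> ?g ` {..<n}" by auto
  moreover have "card (c ` {..<n}) = card (?g ` {..<n})"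
    using inj_g \<open>inj_on c {..<n}\<close> by (simp add: card_image)
  ultimately show ?thesis by (intro card_subset_eq[symmetric]) auto
qed

lemma equal_powers_rotated_roots_of_unity:
  fixes c :: "nat \<Rightarrow> complex"
  assumes "n \<ge> 1" "inj_on c {..<n}" "c 0 \<noteq> 0"
    and "\<And>j. j < n \<Longrightarrow> c j ^ n = c 0 ^ n"
  shows "\<exists>\<sigma>. \<sigma> permutes {1..<n} \<and>
           (\<forall>j<n. c (\<sigma> j) = c 0 * exp (2 * complex_of_real pi * \<i> * of_nat j / of_nat n))"
proof -
  let ?g = "\<lambda>k. c 0 * exp (2 * complex_of_real pi * \<i> * of_nat k / of_nat n)"
  have "inj_on ?g {..<n}"
    using complex_root_unity_eq[OF \<open>n \<ge> 1\<close>] \<open>c 0 \<noteq> 0\<close> by (auto intro!: inj_onI)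
  from permutes_matching_images[OF \<open>inj_on c {..<n}\<close> this
      equal_powers_image_eq_rotated_roots_of_unity[OF assms]]
  obtain \<sigma> where \<sigma>: "\<sigma> permutes {..<n}" "\<forall>j<n. c (\<sigma> j) = ?g j"
    by auto
  have "c (\<sigma> 0) = c 0" using \<sigma>(2) \<open>n \<ge> 1\<close> by simp
  then have "\<sigma> 0 = 0"
    using \<open>n \<ge> 1\<close> \<open>inj_on c {..<n}\<close> permutes_in_image[OF \<sigma>(1), of 0]
    by (auto dest: inj_onD)
  then have "\<sigma> permutes {1..<n}"
    by (intro permutes_superset[OF \<sigma>(1)]) (auto simp: not_less_eq_eq)
  with \<sigma>(2) show ?thesis by blast
qed

theorem lemma2:
  fixes n :: nat and c :: "nat \<Rightarrow> complex" and x :: "nat \<Rightarrow> real"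
  assumes "n \<ge> 1"
    and "inj_on c {..<n}"
    and "\<And>j. j < n \<Longrightarrow> norm (c j) = 1"
    and "\<And>j. j < n \<Longrightarrow> x j \<noteq> 0"
    and "\<And>k. k < n \<Longrightarrow>
           (\<Sum>j<n. c j ^ k * complex_of_real (x j)) = (if k = 0 then 1 else 0)"
  shows "(\<forall>j<n. x j = 1 / real n) \<and>
         (\<exists>\<sigma>. \<sigma> permutes {1..<n} \<and>
            (\<forall>j<n. c (\<sigma> j) = c 0 * exp (2 * complex_of_real pi * \<i> * of_nat j / of_nat n)))"
proof -
  have nonzero: "c j \<noteq> 0" if "j < n" for j using assms(3)[OF that] by auto
  then have "c 0 \<noteq> 0" using assms(1) by simp
  have powers: "c j ^ n = c 0 ^ n" if "j < n" for j
    using unit_circle_moments_equal_powers[OF assms(3,5) that] .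
  have "x j = 1 / real n" if "j < n" for j
  proof -
    have "complex_of_real (x j) = 1 / of_nat n"
      by (rule moments_equal_powers_weight[OF assms(2) _ assms(5) that nonzero[OF that]])
        (metis powers that)
    then have "complex_of_real (x j) = complex_of_real (1 / real n)" by simp
    then show ?thesis by (simp only: of_real_eq_iff)
  qed
  moreover have "\<exists>\<sigma>. \<sigma> permutes {1..<n} \<and>
      (\<forall>j<n. c (\<sigma> j) = c 0 * exp (2 * complex_of_real pi * \<i> * of_nat j / of_nat n))"
    by (rule equal_powers_rotated_roots_of_unity[OF assms(1,2) \<open>c 0 \<noteq> 0\<close> powers])
  ultimately show ?thesis by blast
qed

end
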